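(* Let $\Sigma$ be an alphabet with $|\Sigma|\ge 3$ and $f\colon\Sigma^*\to\Sigma^*$ RCP. If $f(a)\in a\Sigma^*$ for every letter $a\in\Sigma$, then $f(x)\in x\Sigma^*$ for every word $x\in\Sigma^*$.
   Context: $\Sigma^*$ is the free monoid over $\Sigma$ (finite words, concatenation, empty word $\varepsilon$). For a word $w$, $w\Sigma^*$ denotes the set of words having $w$ as a prefix. A function $f\colon(\Sigma^* )^k\to\Sigma^*$ is RCP if for every monoid morphism $\varphi\colon\Sigma^*\to\Sigma^*$ and all $u_1,\ldots,u_k,v_1,\ldots,v_k$ with $\varphi(u_i)=\varphi(v_i)$ for all $i$, we have $\varphi(f(u_1,\ldots,u_k))=\varphi(f(v_1,\ldots,v_k))$. *)

theory Defs
  imports Main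
begin

definition monoid_morphism :: "('a list \<Rightarrow> 'a list) \<Rightarrow> bool" where
  "monoid_morphism \<phi> \<longleftrightarrow> \<phi> [] = [] \<and> (\<forall>u v. \<phi> (u @ v) = \<phi> u @ \<phi> v)"

text \<open>RCP for unary word functions (k = 1).\<close>
definition RCP :: "('a list \<Rightarrow> 'a list) \<Rightarrow> bool" where
  "RCP f \<longleftrightarrow> (\<forall>\<phi> u v. monoid_morphism \<phi> \<longrightarrow> \<phi> u = \<phi> v \<longrightarrow> \<phi> (f u) = \<phi> (f v))"

end

theory Submission
  imports Defs "HOL-Library.Sublist"
begin

text \<open>
  If the letter \<open>a\<close> does not occur in \<open>u\<close>, the morphism substituting \<open>u\<close> for \<open>a\<close>
  identifies \<open>[a]\<close> with \<open>u\<close>, so by RCP its image of \<open>f u\<close> starts with \<open>u\<close>.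
  Likewise, renaming \<open>b\<close> into \<open>c \<noteq> b\<close> identifies a word with its renaming, which
  avoids \<open>b\<close>; so the prefix property of \<open>f\<close> on words avoiding \<open>b\<close> passes to the
  renamed image of \<open>f u\<close> for arbitrary \<open>u\<close>. Such facts about images force \<open>u\<close> to be
  a prefix of \<open>f u\<close> itself once, for each letter \<open>e\<close> of \<open>u\<close> and each letter
  \<open>d \<noteq> e\<close>, one of the morphisms maps \<open>e\<close> and \<open>d\<close> to distinct letters. Two
  absent letters give such a family directly; with a third letter at hand,
  renamings reduce words avoiding one letter, and then all words, to that case.
\<close>

lemma monoid_morphism_append:
  "monoid_morphism \<phi> \<Longrightarrow> \<phi> (u @ v) = \<phi> u @ \<phi> v"
  by (simp add: monoid_morphism_def)

lemma monoid_morphism_Cons: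
  "monoid_morphism \<phi> \<Longrightarrow> \<phi> (x # w) = \<phi> [x] @ \<phi> w"
  using monoid_morphism_append[of \<phi> "[x]" w] by simp

lemma RCP_prefix_transfer:
  assumes "RCP f" "monoid_morphism \<phi>" "\<phi> u = \<phi> v" "prefix u (f u)"
  shows "prefix (\<phi> v) (\<phi> (f v))"
proof -
  obtain w where "f u = u @ w" using assms(4) by (auto simp: prefix_def)
  then have "\<phi> (f u) = \<phi> v @ \<phi> w"
    using assms(2,3) by (simp add: monoid_morphism_append)
  moreover have "\<phi> (f v) = \<phi> (f u)"
    using assms(1-3) unfolding RCP_def by metis
  ultimately show ?thesis by simp
qed

definition letter_separating :: "('a list \<Rightarrow> 'a list) set \<Rightarrow> 'a set \<Rightarrow> bool" where
  "letter_separating H A \<longleftrightarrow>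
    (\<forall>e\<in>A. \<forall>d. \<exists>h\<in>H. \<exists>x y. h [e] = [x] \<and> h [d] = [y] \<and> (x = y \<longrightarrow> d = e))"

lemma prefix_if_letter_separating:
  assumes homs: "\<forall>h\<in>H. monoid_morphism h"
    and "letter_separating H (set z)"
    and "\<forall>h\<in>H. prefix (h z) (h p)"
  shows "prefix z p"
  using assms(2,3)
proof (induction z arbitrary: p)
  case Nil
  then show ?case by simp
next
  case (Cons e z)
  then have separating: "\<exists>h\<in>H. \<exists>x y. h [e] = [x] \<and> h [d] = [y] \<and> (x = y \<longrightarrow> d = e)" for d
    by (simp add: letter_separating_def)
  show ?case
  proof (cases p)
    case Nil
    obtain h x where "h \<in> H" "h [e] = [x]"
      using separating by blast
    moreover have "h [] = []"
      using homs \<open>h \<in> H\<close> by (simp add: monoid_morphism_def)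
    ultimately show ?thesis
      using Cons.prems(2) homs Nil by (metis monoid_morphism_Cons append_Cons prefix_Nil list.distinct(1))
  next
    case (Cons d p')
    obtain h x y where "h \<in> H" "h [e] = [x]" "h [d] = [y]" "x = y \<longrightarrow> d = e"
      using separating by blast
    moreover have "h (e # z) = x # h z" "h (d # p') = y # h p'"
      using calculation homs monoid_morphism_Cons by (metis append_Cons append_Nil)+
    ultimately have "d = e"
      using Cons.prems(2) \<open>p = d # p'\<close> by (metis Cons_prefix_Cons)
    have "prefix (h z) (h p')" if "h \<in> H" for h
    proof -
      have "prefix (h [e] @ h z) (h [e] @ h p')"
        using Cons.prems(2) that homs \<open>p = d # p'\<close> \<open>d = e\<close>
        by (metis monoid_morphism_Cons)
      then show ?thesis by simp
    qed
    moreover have "letter_separating H (set z)"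
      using Cons.prems(1) by (simp add: letter_separating_def)
    ultimately show ?thesis
      using Cons.IH \<open>p = d # p'\<close> \<open>d = e\<close> by simp
  qed
qed

definition subst_letter :: "'a \<Rightarrow> 'a list \<Rightarrow> 'a list \<Rightarrow> 'a list" where
  "subst_letter a u w = concat (map (\<lambda>d. if d = a then u else [d]) w)"

lemma monoid_morphism_subst_letter: "monoid_morphism (subst_letter a u)"
  by (simp add: monoid_morphism_def subst_letter_def)

lemma subst_letter_singleton [simp]: "subst_letter a u [d] = (if d = a then u else [d])"
  by (simp add: subst_letter_def)

lemma subst_letter_fresh: "a \<notin> set w \<Longrightarrow> subst_letter a u w = w"
  by (induction w) (auto simp: subst_letter_def)

lemma set_subst_letter_single:
  "set (subst_letter b [c] w) \<subseteq> insert c (set w - {b})"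
  by (auto simp: subst_letter_def)

lemma RCP_prefix_transfer_rename:
  assumes "RCP f" "b \<noteq> c"
    and "prefix (subst_letter b [c] w) (f (subst_letter b [c] w))"
  shows "prefix (subst_letter b [c] w) (subst_letter b [c] (f w))"
proof -
  have "b \<notin> set (subst_letter b [c] w)"
    using set_subst_letter_single assms(2) by fastforce
  then have "subst_letter b [c] (subst_letter b [c] w) = subst_letter b [c] w"
    by (rule subst_letter_fresh)
  then show ?thesis
    using RCP_prefix_transfer[OF assms(1) monoid_morphism_subst_letter _ assms(3)] by simp
qed

lemma ex_third_letter:
  assumes "card (UNIV :: 'a::finite set) \<ge> 3"
  shows "\<exists>c::'a. c \<noteq> a \<and> c \<noteq> b"
proof (rule ccontr)
  assume "\<not> ?thesis"
  then have "card (UNIV :: 'a set) \<le> card {a, b}"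
    by (intro card_mono) auto
  also have "\<dots> \<le> 2"
    by (simp add: card_insert_if)
  finally show False
    using assms by simp
qed

context
  fixes f :: "'a list \<Rightarrow> 'a list"
  assumes RCP: "RCP f"
    and letters: "\<And>a. prefix [a] (f [a])"
begin

lemma prefix_subst_fresh_letter:
  assumes "a \<notin> set y"
  shows "prefix y (subst_letter a y (f y))"
proof -
  have "subst_letter a y [a] = subst_letter a y y"
    using subst_letter_fresh[OF assms] by simp
  from RCP_prefix_transfer[OF RCP monoid_morphism_subst_letter this letters]
  show ?thesis
    using subst_letter_fresh[OF assms] by simp
qed

lemma prefix_if_two_letters_absent:
  assumes "a \<noteq> c" "a \<notin> set y" "c \<notin> set y"
  shows "prefix y (f y)"
proof (rule prefix_if_letter_separating)
  let ?H = "{subst_letter a y, subst_letter c y}"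
  show "\<forall>h\<in>?H. monoid_morphism h"
    by (simp add: monoid_morphism_subst_letter)
  show "\<forall>h\<in>?H. prefix (h y) (h (f y))"
    using assms by (simp add: prefix_subst_fresh_letter subst_letter_fresh)
  show "letter_separating ?H (set y)"
    using assms by (auto simp: letter_separating_def)
qed

lemma prefix_if_letter_absent:
  assumes third: "\<And>a b::'a. \<exists>c. c \<noteq> a \<and> c \<noteq> b"
    and "a \<notin> set y"
  shows "prefix y (f y)"
proof (rule prefix_if_letter_separating)
  let ?H = "insert (subst_letter a y) {subst_letter b [c] | b c. b \<noteq> a \<and> c \<noteq> a \<and> b \<noteq> c}"
  show "\<forall>h\<in>?H. monoid_morphism h"
    by (blast intro: monoid_morphism_subst_letter)
  have "prefix (subst_letter b [c] y) (subst_letter b [c] (f y))"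
    if "b \<noteq> a" "c \<noteq> a" "b \<noteq> c" for b c
  proof (rule RCP_prefix_transfer_rename[OF RCP \<open>b \<noteq> c\<close>])
    have "a \<notin> set (subst_letter b [c] y)" "b \<notin> set (subst_letter b [c] y)"
      using set_subst_letter_single[of b c y] that \<open>a \<notin> set y\<close> by auto
    then show "prefix (subst_letter b [c] y) (f (subst_letter b [c] y))"
      using prefix_if_two_letters_absent \<open>b \<noteq> a\<close> by blast
  qed
  moreover have "prefix (subst_letter a y y) (subst_letter a y (f y))"
    using prefix_subst_fresh_letter[OF \<open>a \<notin> set y\<close>] subst_letter_fresh[OF \<open>a \<notin> set y\<close>]
    by simp
  ultimately show "\<forall>h\<in>?H. prefix (h y) (h (f y))"
    by blast
  show "letter_separating ?H (set y)"
    unfolding letter_separating_def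
  proof (intro ballI allI)
    fix e d :: 'a
    assume "e \<in> set y"
    then have "e \<noteq> a" using \<open>a \<notin> set y\<close> by blast
    obtain c where "c \<noteq> a" "c \<noteq> e" using third by blast
    show "\<exists>h\<in>?H. \<exists>x x'. h [e] = [x] \<and> h [d] = [x'] \<and> (x = x' \<longrightarrow> d = e)"
    proof (cases "d = a")
      case True
      show ?thesis
      proof (rule bexI[of _ "subst_letter e [c]"])
        show "subst_letter e [c] \<in> ?H"
          using \<open>e \<noteq> a\<close> \<open>c \<noteq> a\<close> \<open>c \<noteq> e\<close> by blast
        show "\<exists>x x'. subst_letter e [c] [e] = [x] \<and> subst_letter e [c] [d] = [x'] \<and> (x = x' \<longrightarrow> d = e)"
          using \<open>d = a\<close> \<open>e \<noteq> a\<close> \<open>c \<noteq> a\<close> by simp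
      qed
    next
      case False
      show ?thesis
      proof (rule bexI[of _ "subst_letter a y"])
        show "\<exists>x x'. subst_letter a y [e] = [x] \<and> subst_letter a y [d] = [x'] \<and> (x = x' \<longrightarrow> d = e)"
          using \<open>d \<noteq> a\<close> \<open>e \<noteq> a\<close> by simp
      qed simp
    qed
  qed
qed

lemma prefix_of_image:
  assumes third: "\<And>a b::'a. \<exists>c. c \<noteq> a \<and> c \<noteq> b"
  shows "prefix x (f x)"
proof (rule prefix_if_letter_separating)
  let ?H = "{subst_letter b [c] | b c. b \<noteq> c}"
  show "\<forall>h\<in>?H. monoid_morphism h"
    by (blast intro: monoid_morphism_subst_letter)
  have "prefix (subst_letter b [c] x) (subst_letter b [c] (f x))" if "b \<noteq> c" for b c
  proof (rule RCP_prefix_transfer_rename[OF RCP that])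
    have "b \<notin> set (subst_letter b [c] x)"
      using set_subst_letter_single[of b c x] that by auto
    then show "prefix (subst_letter b [c] x) (f (subst_letter b [c] x))"
      using prefix_if_letter_absent[OF third] by blast
  qed
  then show "\<forall>h\<in>?H. prefix (h x) (h (f x))"
    by fastforce
  show "letter_separating ?H (set x)"
    unfolding letter_separating_def
  proof (intro ballI allI)
    fix e d :: 'a
    obtain c where "c \<noteq> e" "c \<noteq> d" using third by blast
    show "\<exists>h\<in>?H. \<exists>y y'. h [e] = [y] \<and> h [d] = [y'] \<and> (y = y' \<longrightarrow> d = e)"
    proof (rule bexI[of _ "subst_letter e [c]"])
      show "subst_letter e [c] \<in> ?H"
        using \<open>c \<noteq> e\<close> by blast
      show "\<exists>y y'. subst_letter e [c] [e] = [y] \<and> subst_letter e [c] [d] = [y'] \<and> (y = y' \<longrightarrow> d = e)"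
        using \<open>c \<noteq> d\<close> by simp
    qed
  qed
qed

end

theorem mainTheorem9:
  fixes f :: "'a::finite list \<Rightarrow> 'a list"
  assumes "card (UNIV :: 'a set) \<ge> 3"
    and "RCP f"
    and "\<forall>a::'a. \<exists>w. f [a] = [a] @ w"
  shows "\<forall>x::'a list. \<exists>w. f x = x @ w"
proof -
  have letters: "\<And>a. prefix [a] (f [a])"
    using assms(3) by (simp add: prefix_def)
  have "prefix x (f x)" for x
    using prefix_of_image[OF assms(2) letters ex_third_letter[OF assms(1)]] .
  then show ?thesis
    by (simp add: prefix_def)
qed

end
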